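(* Let $S_1$ and $S_2$ be semigroups with finite generating sets $A_1$ and $A_2$ respectively. If $(S_1,d_{A_1})$ quasi-isometrically embeds into $(S_2,d_{A_2})$ and $(S_2,d_{A_2})$ quasi-isometrically embeds into $(S_1,d_{A_1})$, then $S_1$ and $S_2$ have the same growth type. In particular, growth type is a quasi-isometry invariant of finitely generated semigroups.
   Context: For a semigroup $S$ generated by a finite set $A$, $d_A(x,y)=\inf\{|w|:w\in A^*,\ xw=y\}$ ($A^*$ the free monoid on $A$, $\inf\emptyset=\infty$), a not necessarily symmetric distance with values in $\mathbb{R}^{\ge0}\cup\{\infty\}$. A map $f:X\to X'$ of such spaces is a quasi-isometric embedding if there are $1\le\lambda<\infty$, $0<\epsilon<\infty$ with $\frac1\lambda d(x,y)-\epsilon\le d'(f(x),f(y))\le\lambda d(x,y)+\epsilon$ for all $x,y$; it is a quasi-isometry if in addition there is $0\le\mu<\infty$ such that every $x'\in X'$ has some $x$ with $\max(d'(x',f(x)),d'(f(x),x'))\le\mu$. Semigroups $S,T$ are quasi-isometric if $(S,d_A)$, $(T,d_B)$ are quasi-isometric for some finite generating sets $A,B$. A growth function is a monotone non-decreasing function $\mathbb{N}\to\mathbb{N}$; write $\alpha_1\preccurlyeq\alpha_2$ if there are natural numbers $k_1,k_2\ge1$ with $\alpha_1(t)\le k_1\alpha_2(k_2t)$ for all $t$, and $\alpha_1\sim\alpha_2$ if $\alpha_1\preccurlyeq\alpha_2$ and $\alpha_2\preccurlyeq\alpha_1$; the growth type of $\alpha$ is its $\sim$-class. The growth function of $S$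 with respect to $A$ is $g_S(m)=|\{z\in S: l_A(z)\le m\}|$, where $l_A(z)$ is the minimal length of a nonempty word over $A$ representing $z$; its growth type (the growth type of $S$) does not depend on the finite generating set. *)

theory Defs
  imports "HOL-Library.Extended_Real"
begin

definition word_prod :: "'a::semigroup_mult list \<Rightarrow> 'a" where
  "word_prod w = foldl (*) (hd w) (tl w)"

definition generates :: "'a::semigroup_mult set \<Rightarrow> bool" where
  "generates A \<longleftrightarrow> (\<forall>z. \<exists>w. w \<noteq> [] \<and> set w \<subseteq> A \<and> word_prod w = z)"

definition fin_gen :: "'a::semigroup_mult set \<Rightarrow> bool" where
  "fin_gen A \<longleftrightarrow> finite A \<and> generates A"

text \<open>d_A(x,y) = inf of lengths of words w over A (possibly empty) with x w = y;
  inf of the empty set is infinity.\<close>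
definition sdist :: "'a::semigroup_mult set \<Rightarrow> 'a \<Rightarrow> 'a \<Rightarrow> enat" where
  "sdist A x y = (INF w \<in> {w. set w \<subseteq> A \<and> foldl (*) x w = y}. enat (length w))"

definition qi_embedding ::
  "'a::semigroup_mult set \<Rightarrow> 'b::semigroup_mult set \<Rightarrow> ('a \<Rightarrow> 'b) \<Rightarrow> bool" where
  "qi_embedding A B f \<longleftrightarrow>
     (\<exists>(lam::real) (eps::real). 1 \<le> lam \<and> 0 < eps \<and>
        (\<forall>x y. ereal (1/lam) * ereal_of_enat (sdist A x y) - ereal eps
                  \<le> ereal_of_enat (sdist B (f x) (f y))
              \<and> ereal_of_enat (sdist B (f x) (f y))
                  \<le> ereal lam * ereal_of_enat (sdist A x y) + ereal eps))"

definition quasi_isometry ::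
  "'a::semigroup_mult set \<Rightarrow> 'b::semigroup_mult set \<Rightarrow> ('a \<Rightarrow> 'b) \<Rightarrow> bool" where
  "quasi_isometry A B f \<longleftrightarrow> qi_embedding A B f \<and>
     (\<exists>(mu::real). 0 \<le> mu \<and> (\<forall>x'. \<exists>x.
        max (ereal_of_enat (sdist B x' (f x))) (ereal_of_enat (sdist B (f x) x')) \<le> ereal mu))"

definition word_length :: "'a::semigroup_mult set \<Rightarrow> 'a \<Rightarrow> enat" where
  "word_length A z = (INF w \<in> {w. w \<noteq> [] \<and> set w \<subseteq> A \<and> word_prod w = z}. enat (length w))"

definition growth :: "'a::semigroup_mult set \<Rightarrow> nat \<Rightarrow> nat" where
  "growth A m = card {z. word_length A z \<le> enat m}"

definition growth_le :: "(nat \<Rightarrow> nat) \<Rightarrow> (nat \<Rightarrow> nat) \<Rightarrow> bool" where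
  "growth_le a1 a2 \<longleftrightarrow> (\<exists>k1 k2::nat. 1 \<le> k1 \<and> 1 \<le> k2 \<and> (\<forall>t. a1 t \<le> k1 * a2 (k2 * t)))"

definition growth_equiv :: "(nat \<Rightarrow> nat) \<Rightarrow> (nat \<Rightarrow> nat) \<Rightarrow> bool" where
  "growth_equiv a1 a2 \<longleftrightarrow> growth_le a1 a2 \<and> growth_le a2 a1"

end

theory Submission
  imports Defs
begin

text \<open>A quasi-isometric embedding \<open>f\<close> is coarsely Lipschitz and has uniformly bounded fibres
  (points with the same image are within bounded distance of each other). Write a word of
  length at most \<open>m\<close> as a generator \<open>a\<close> followed by a path of length less than \<open>m\<close>: then
  \<open>f\<close> maps the \<open>m\<close>-ball of \<open>S\<^sub>1\<close> into a ball of radius \<open>L m + D\<close> of \<open>S\<^sub>2\<close>, at most \<open>K\<close>-to-one,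
  so \<open>g\<^sub>1(m) \<le> K g\<^sub>2((L + D) m)\<close>. The second assertion reduces to the first: the identity
  between two finite generating sets is such an embedding, so the growth type does not depend
  on the generating set, and a quasi-isometry has a coarse inverse, which again is coarsely
  Lipschitz with bounded fibres.\<close>

section \<open>Word metrics\<close>

lemma INF_enat_le_enatD:
  assumes "(INF w\<in>S. enat (g w)) \<le> enat n"
  shows "\<exists>w\<in>S. g w \<le> n"
proof -
  obtain w where "w \<in> S"
    using assms by (cases "S = {}") (auto simp: top_enat_def)
  then have "(INF w\<in>S. enat (g w)) \<in> (\<lambda>w. enat (g w)) ` S"
    by (blast intro: wellorder_InfI)
  with assms show ?thesis by auto
qed

lemma sdist_le_length: "set w \<subseteq> A \<Longrightarrow> foldl (*) x w = y \<Longrightarrow> sdist A x y \<le> enat (length w)"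
  unfolding sdist_def by (rule INF_lower2[of w]) auto

lemma sdist_le_enatE:
  assumes "sdist A x y \<le> enat n"
  obtains w where "set w \<subseteq> A" "foldl (*) x w = y" "length w \<le> n"
  using INF_enat_le_enatD[OF assms[unfolded sdist_def]] by blast

lemma word_length_le_length:
  "w \<noteq> [] \<Longrightarrow> set w \<subseteq> A \<Longrightarrow> word_prod w = z \<Longrightarrow> word_length A z \<le> enat (length w)"
  unfolding word_length_def by (rule INF_lower2[of w]) auto

lemma word_length_le_enatE:
  assumes "word_length A z \<le> enat n"
  obtains w where "w \<noteq> []" "set w \<subseteq> A" "word_prod w = z" "length w \<le> n"
  using INF_enat_le_enatD[OF assms[unfolded word_length_def]] by blast

lemma word_length_le_enat_imp_pos: "word_length A z \<le> enat m \<Longrightarrow> 1 \<le> m"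
  by (erule word_length_le_enatE) (metis Suc_leI le_trans length_greater_0_conv One_nat_def)

lemma foldl_mult_left: "foldl (*) (x * y) w = x * foldl (*) (y::'a::semigroup_mult) w"
  by (induction w arbitrary: y) (auto simp: mult.assoc)

lemma foldl_eq_mult_word_prod: "w \<noteq> [] \<Longrightarrow> foldl (*) x w = x * word_prod w"
  by (cases w) (auto simp: word_prod_def foldl_mult_left)

lemma sdist_self: "sdist A x x = 0"
proof -
  have "sdist A x x \<le> enat 0" using sdist_le_length[of "[]" A x x] by simp
  then show ?thesis by (simp add: enat_0)
qed

lemma sdist_triangle:
  assumes "sdist A x y \<le> enat p" "sdist A y z \<le> enat q"
  shows "sdist A x z \<le> enat (p + q)"
proof -
  obtain u where u: "set u \<subseteq> A" "foldl (*) x u = y" "length u \<le> p"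
    using assms(1) by (rule sdist_le_enatE)
  obtain v where v: "set v \<subseteq> A" "foldl (*) y v = z" "length v \<le> q"
    using assms(2) by (rule sdist_le_enatE)
  have "sdist A x z \<le> enat (length (u @ v))" using u v by (intro sdist_le_length) auto
  also have "\<dots> \<le> enat (p + q)" using u v by simp
  finally show ?thesis .
qed

lemma word_length_le_add_sdist:
  assumes "word_length A x \<le> enat p" "sdist A x y \<le> enat q"
  shows "word_length A y \<le> enat (p + q)"
proof -
  obtain u where u: "u \<noteq> []" "set u \<subseteq> A" "word_prod u = x" "length u \<le> p"
    using assms(1) by (rule word_length_le_enatE)
  obtain v where v: "set v \<subseteq> A" "foldl (*) x v = y" "length v \<le> q"
    using assms(2) by (rule sdist_le_enatE)
  have "word_prod (u @ v) = y" using u v by (cases u) (auto simp: word_prod_def)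
  then have "word_length A y \<le> enat (length (u @ v))"
    using u v by (intro word_length_le_length) auto
  also have "\<dots> \<le> enat (p + q)" using u v by simp
  finally show ?thesis .
qed

lemma word_length_le_enat_imp_sdist_from_generator:
  assumes "word_length A z \<le> enat m"
  shows "\<exists>a\<in>A. sdist A a z \<le> enat m"
proof -
  obtain w where w: "w \<noteq> []" "set w \<subseteq> A" "word_prod w = z" "length w \<le> m"
    using assms by (rule word_length_le_enatE)
  then obtain a w' where "w = a # w'" by (cases w) auto
  with w have "a \<in> A" "sdist A a z \<le> enat (length w')" "length w' \<le> m"
    by (auto simp: word_prod_def intro!: sdist_le_length)
  then show ?thesis by (meson enat_ord_simps(1) order_trans)
qed

lemma sdist_mult_right_le_word_length: "sdist A x (x * y) \<le> word_length A y"
proof (cases "word_length A y")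
  case (enat n)
  then have "word_length A y \<le> enat n" by simp
  then obtain w where w: "w \<noteq> []" "set w \<subseteq> A" "word_prod w = y" "length w \<le> n"
    by (rule word_length_le_enatE)
  have "sdist A x (x * y) \<le> enat (length w)"
    using sdist_le_length[of w A x "x * y"] w foldl_eq_mult_word_prod[of w x] by simp
  also have "\<dots> \<le> word_length A y" using w enat by simp
  finally show ?thesis .
qed simp

lemma finite_sdist_ball:
  assumes "finite A"
  shows "finite {y. sdist A x y \<le> enat n}"
    and "card {y. sdist A x y \<le> enat n} \<le> card {w. set w \<subseteq> A \<and> length w \<le> n}"
proof -
  have sub: "{y. sdist A x y \<le> enat n} \<subseteq> foldl (*) x ` {w. set w \<subseteq> A \<and> length w \<le> n}"
  proof
    fix y assume "y \<in> {y. sdist A x y \<le> enat n}"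
    then have "sdist A x y \<le> enat n" by simp
    then obtain w where "set w \<subseteq> A" "foldl (*) x w = y" "length w \<le> n"
      by (rule sdist_le_enatE)
    then show "y \<in> foldl (*) x ` {w. set w \<subseteq> A \<and> length w \<le> n}" by blast
  qed
  have fin: "finite {w. set w \<subseteq> A \<and> length w \<le> n}"
    using assms by (rule finite_lists_length_le)
  show "finite {y. sdist A x y \<le> enat n}" using sub fin finite_subset by blast
  show "card {y. sdist A x y \<le> enat n} \<le> card {w. set w \<subseteq> A \<and> length w \<le> n}"
    using card_mono[OF finite_imageI[OF fin] sub] card_image_le[OF fin, of "foldl (*) x"] by linarith
qed

lemma finite_word_length_ball:
  assumes "finite A"
  shows "finite {z. word_length A z \<le> enat n}"
proof -
  have "{z. word_length A z \<le> enat n} \<subseteq> word_prod ` {w. set w \<subseteq> A \<and> length w \<le> n}"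
  proof
    fix z assume "z \<in> {z. word_length A z \<le> enat n}"
    then have "word_length A z \<le> enat n" by simp
    then obtain w where "set w \<subseteq> A" "word_prod w = z" "length w \<le> n"
      by (rule word_length_le_enatE)
    then show "z \<in> word_prod ` {w. set w \<subseteq> A \<and> length w \<le> n}" by blast
  qed
  then show ?thesis using finite_lists_length_le[OF assms] finite_subset by blast
qed

lemma generates_word_length_bounded:
  assumes "finite S" "generates B"
  shows "\<exists>C. \<forall>a\<in>S. word_length B (g a) \<le> enat C"
proof -
  have "\<exists>n. word_length B (g a) \<le> enat n" for a
  proof -
    obtain w where "w \<noteq> []" "set w \<subseteq> B" "word_prod w = g a"
      using assms(2) unfolding generates_def by blast
    then show ?thesis using word_length_le_length by blast
  qed
  then obtain n where n: "\<And>a. word_length B (g a) \<le> enat (n a)" by metis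
  have "word_length B (g a) \<le> enat (Max (n ` S))" if "a \<in> S" for a
  proof -
    have "word_length B (g a) \<le> enat (n a)" by (rule n)
    also have "\<dots> \<le> enat (Max (n ` S))" using assms(1) that by simp
    finally show ?thesis .
  qed
  then show ?thesis by blast
qed

lemma sdist_le_mult_sdist:
  assumes "\<forall>a\<in>A. word_length B a \<le> enat C" "sdist A x y \<le> enat n"
  shows "sdist B x y \<le> enat (C * n)"
proof -
  have "sdist B x (foldl (*) x w) \<le> enat (C * length w)" if "set w \<subseteq> A" for x w
    using that
  proof (induction w arbitrary: x)
    case Nil
    then show ?case by (simp add: sdist_self)
  next
    case (Cons a w)
    have "sdist B x (x * a) \<le> word_length B a" by (rule sdist_mult_right_le_word_length)
    also have "\<dots> \<le> enat C" using assms(1) Cons.prems by simp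
    finally have "sdist B x (x * a) \<le> enat C" .
    from sdist_triangle[OF this Cons.IH] Cons.prems show ?case by simp
  qed
  moreover obtain w where "set w \<subseteq> A" "foldl (*) x w = y" "length w \<le> n"
    using assms(2) by (rule sdist_le_enatE)
  ultimately have "sdist B x y \<le> enat (C * length w)" by blast
  also have "\<dots> \<le> enat (C * n)" using \<open>length w \<le> n\<close> by simp
  finally show ?thesis .
qed

section \<open>Quasi-isometric embeddings with natural constants\<close>

lemma ereal_of_enat_le_ereal_imp: "ereal_of_enat e \<le> ereal r \<Longrightarrow> e \<le> enat (nat \<lceil>r\<rceil>)"
  by (cases e) (auto, linarith)

lemma qi_embedding_upper_bound:
  assumes "qi_embedding A B f"
  shows "\<exists>L E. \<forall>x y n. sdist A x y \<le> enat n \<longrightarrow> sdist B (f x) (f y) \<le> enat (L * n + E)"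
proof -
  obtain lam eps where le: "1 \<le> lam" "0 < eps" and
    up: "\<And>x y. ereal_of_enat (sdist B (f x) (f y)) \<le> ereal lam * ereal_of_enat (sdist A x y) + ereal eps"
    using assms unfolding qi_embedding_def by blast
  have "sdist B (f x) (f y) \<le> enat (nat \<lceil>lam\<rceil> * n + nat \<lceil>eps\<rceil>)"
    if dist: "sdist A x y \<le> enat n" for x y n
  proof -
    obtain k where k: "sdist A x y = enat k" "k \<le> n" using dist by (cases "sdist A x y") auto
    have "ereal_of_enat (sdist B (f x) (f y)) \<le> ereal (lam * real k + eps)"
      using up[of x y] k by simp
    then have "sdist B (f x) (f y) \<le> enat (nat \<lceil>lam * real k + eps\<rceil>)"
      by (rule ereal_of_enat_le_ereal_imp)
    moreover have "lam * real k + eps \<le> real (nat \<lceil>lam\<rceil> * n + nat \<lceil>eps\<rceil>)"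
    proof -
      have "lam * real k \<le> real (nat \<lceil>lam\<rceil>) * real n" using k le by (intro mult_mono) auto
      moreover have "eps \<le> real (nat \<lceil>eps\<rceil>)" by linarith
      ultimately show ?thesis by simp
    qed
    then have "nat \<lceil>lam * real k + eps\<rceil> \<le> nat \<lceil>lam\<rceil> * n + nat \<lceil>eps\<rceil>" by linarith
    ultimately show ?thesis by (meson enat_ord_simps(1) order_trans)
  qed
  then show ?thesis by blast
qed

lemma qi_embedding_lower_bound:
  assumes "qi_embedding A B f"
  shows "\<exists>L D. \<forall>x y n. sdist B (f x) (f y) \<le> enat n \<longrightarrow> sdist A x y \<le> enat (L * n + D)"
proof -
  obtain lam eps where le: "1 \<le> lam" "0 < eps" and
    low: "\<And>x y. ereal (1/lam) * ereal_of_enat (sdist A x y) - ereal eps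
                  \<le> ereal_of_enat (sdist B (f x) (f y))"
    using assms unfolding qi_embedding_def by blast
  define L where "L = nat \<lceil>lam\<rceil>"
  have "sdist A x y \<le> enat (L * n + L * nat \<lceil>eps\<rceil>)"
    if "sdist B (f x) (f y) \<le> enat n" for x y n
  proof -
    have dist: "ereal (1/lam) * ereal_of_enat (sdist A x y) - ereal eps \<le> ereal (real n)"
      using low[of x y] that order_trans by (cases "sdist B (f x) (f y)") fastforce+
    show ?thesis
    proof (cases "sdist A x y")
      case (enat k)
      with dist have "real k \<le> lam * (real n + eps)" using le by (simp add: field_simps)
      also have "\<dots> \<le> real L * (real n + real (nat \<lceil>eps\<rceil>))"
        unfolding L_def using le by (intro mult_mono) auto
      finally show ?thesis using enat by (simp add: algebra_simps flip: of_nat_mult of_nat_add)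
    next
      case infinity
      with dist le show ?thesis by simp
    qed
  qed
  then show ?thesis by blast
qed

section \<open>Growth functions\<close>

lemma growth_le_trans: "growth_le a b \<Longrightarrow> growth_le b c \<Longrightarrow> growth_le a c"
  unfolding growth_le_def
proof (elim exE conjE)
  fix k1 k2 k1' k2' :: nat
  assume "1 \<le> k1" "1 \<le> k2" "1 \<le> k1'" "1 \<le> k2'"
    and ab: "\<forall>t. a t \<le> k1 * b (k2 * t)" and bc: "\<forall>t. b t \<le> k1' * c (k2' * t)"
  have "a t \<le> (k1 * k1') * c ((k2' * k2) * t)" for t
  proof -
    have "a t \<le> k1 * b (k2 * t)" using ab by blast
    also have "\<dots> \<le> k1 * (k1' * c (k2' * (k2 * t)))" using bc by (intro mult_le_mono2) blast
    finally show ?thesis by (simp add: mult.assoc)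
  qed
  moreover have "1 \<le> k1 * k1'" "1 \<le> k2' * k2"
    using \<open>1 \<le> k1\<close> \<open>1 \<le> k2\<close> \<open>1 \<le> k1'\<close> \<open>1 \<le> k2'\<close> by simp_all
  ultimately show "\<exists>k1 k2. 1 \<le> k1 \<and> 1 \<le> k2 \<and> (\<forall>t. a t \<le> k1 * c (k2 * t))" by blast
qed

lemma card_le_mult_card_image:
  assumes "finite X" "\<And>y. card {z\<in>X. h z = y} \<le> K"
  shows "card X \<le> K * card (h ` X)"
proof -
  have "X = (\<Union>y\<in>h ` X. {z\<in>X. h z = y})" by auto
  then have "card X \<le> (\<Sum>y\<in>h ` X. card {z\<in>X. h z = y})"
    by (metis assms(1) card_UN_le finite_imageI)
  also have "\<dots> \<le> card (h ` X) * K"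
    using assms(2) sum_bounded_above[of "h ` X" "\<lambda>y. card {z\<in>X. h z = y}" K] by simp
  finally show ?thesis by (simp add: mult.commute)
qed

lemma growth_le_by_coarse_map:
  assumes "finite A" "finite B"
    and bound: "\<And>z m. word_length A z \<le> enat m \<Longrightarrow> word_length B (h z) \<le> enat (c * m + d)"
    and fibre: "\<And>y. \<exists>x. \<forall>z. h z = y \<longrightarrow> sdist A x z \<le> enat R"
  shows "growth_le (growth A) (growth B)"
  unfolding growth_le_def
proof (intro exI conjI allI)
  define K where "K = card {w. set w \<subseteq> A \<and> length w \<le> R}"
  fix t
  let ?X = "{z. word_length A z \<le> enat t}"
  let ?Y = "{z. word_length B z \<le> enat ((c + d + 1) * t)}"
  have "h ` ?X \<subseteq> ?Y"
  proof (rule image_subsetI)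
    fix z assume "z \<in> ?X"
    then have z: "word_length A z \<le> enat t" by simp
    have "d \<le> d * t" using mult_le_mono2[OF word_length_le_enat_imp_pos[OF z], of d] by simp
    then have "c * t + d \<le> (c + d + 1) * t" unfolding add_mult_distrib by linarith
    with bound[OF z] show "h z \<in> ?Y" by (simp add: order_trans)
  qed
  then have image: "card (h ` ?X) \<le> card ?Y"
    by (rule card_mono[OF finite_word_length_ball[OF assms(2)]])
  have fib: "card {z\<in>?X. h z = y} \<le> K" for y
  proof -
    obtain x where "\<forall>z. h z = y \<longrightarrow> sdist A x z \<le> enat R" using fibre by blast
    then have "{z\<in>?X. h z = y} \<subseteq> {z. sdist A x z \<le> enat R}" by blast
    then have "card {z\<in>?X. h z = y} \<le> card {z. sdist A x z \<le> enat R}"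
      by (rule card_mono[OF finite_sdist_ball(1)[OF assms(1)]])
    also have "\<dots> \<le> K" unfolding K_def by (rule finite_sdist_ball(2)[OF assms(1)])
    finally show ?thesis .
  qed
  have "growth A t \<le> K * card (h ` ?X)"
    unfolding growth_def by (rule card_le_mult_card_image[OF finite_word_length_ball[OF assms(1)] fib])
  also have "\<dots> \<le> (K + 1) * growth B ((c + d + 1) * t)"
    unfolding growth_def by (rule mult_le_mono[OF le_add1 image])
  finally show "growth A t \<le> (K + 1) * growth B ((c + d + 1) * t)" .
qed simp_all

lemma growth_le_change_generators:
  fixes A B :: "'a::semigroup_mult set"
  assumes "finite A" "fin_gen B"
  shows "growth_le (growth A) (growth B)"
proof -
  have B: "finite B" "generates B" using assms(2) unfolding fin_gen_def by blast+
  obtain C where C: "\<forall>a\<in>A. word_length B a \<le> enat C"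
    using generates_word_length_bounded[OF assms(1) B(2), of "\<lambda>a. a"] by blast
  show ?thesis
  proof (rule growth_le_by_coarse_map[OF assms(1) B(1), where h=id and c=C and d=C and R=0])
    fix z m assume "word_length A z \<le> enat m"
    then obtain a where "a \<in> A" and dist: "sdist A a z \<le> enat m"
      using word_length_le_enat_imp_sdist_from_generator by blast
    then have "word_length B a \<le> enat C" using C by blast
    then have "word_length B z \<le> enat (C + C * m)"
      using sdist_le_mult_sdist[OF C dist] by (rule word_length_le_add_sdist)
    then show "word_length B (id z) \<le> enat (C * m + C)" by (simp add: add.commute)
  next
    fix y
    show "\<exists>x. \<forall>z. id z = y \<longrightarrow> sdist A x z \<le> enat 0"
      by (intro exI[of _ y]) (simp add: sdist_self enat_0)
  qed
qed

lemma qi_embedding_growth_le: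
  assumes "finite A" "fin_gen B" "qi_embedding A B f"
  shows "growth_le (growth A) (growth B)"
proof -
  have B: "finite B" "generates B" using assms(2) unfolding fin_gen_def by blast+
  obtain L E where up: "\<forall>x y n. sdist A x y \<le> enat n \<longrightarrow> sdist B (f x) (f y) \<le> enat (L * n + E)"
    using qi_embedding_upper_bound[OF assms(3)] by blast
  obtain L' D where low: "\<forall>x y n. sdist B (f x) (f y) \<le> enat n \<longrightarrow> sdist A x y \<le> enat (L' * n + D)"
    using qi_embedding_lower_bound[OF assms(3)] by blast
  obtain C where C: "\<forall>a\<in>A. word_length B (f a) \<le> enat C"
    using generates_word_length_bounded[OF assms(1) B(2)] by blast
  show ?thesis
  proof (rule growth_le_by_coarse_map[OF assms(1) B(1), where h=f and c=L and d="C + E" and R=D])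
    fix z m assume "word_length A z \<le> enat m"
    then obtain a where "a \<in> A" "sdist A a z \<le> enat m"
      using word_length_le_enat_imp_sdist_from_generator by blast
    then have "word_length B (f a) \<le> enat C" "sdist B (f a) (f z) \<le> enat (L * m + E)"
      using C up by blast+
    then have "word_length B (f z) \<le> enat (C + (L * m + E))" by (rule word_length_le_add_sdist)
    then show "word_length B (f z) \<le> enat (L * m + (C + E))" by (simp add: ac_simps)
  next
    fix y
    show "\<exists>x. \<forall>z. f z = y \<longrightarrow> sdist A x z \<le> enat D"
    proof (cases "y \<in> range f")
      case True
      then obtain x where "f x = y" by blast
      have "sdist A x z \<le> enat D" if "f z = y" for z
      proof -
        have "sdist B (f x) (f z) \<le> enat 0"
          using \<open>f x = y\<close> that by (simp add: sdist_self enat_0)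
        then show ?thesis using low by fastforce
      qed
      then show ?thesis by blast
    qed auto
  qed
qed

lemma quasi_isometry_growth_le_converse:
  assumes "fin_gen B1" "finite B2" "quasi_isometry B1 B2 f"
  shows "growth_le (growth B2) (growth B1)"
proof -
  have B1: "finite B1" "generates B1" using assms(1) unfolding fin_gen_def by blast+
  obtain mu where mu: "\<And>x'. \<exists>x. max (ereal_of_enat (sdist B2 x' (f x))) (ereal_of_enat (sdist B2 (f x) x')) \<le> ereal mu"
    using assms(3) unfolding quasi_isometry_def by blast
  define h where "h x' = (SOME x. max (ereal_of_enat (sdist B2 x' (f x))) (ereal_of_enat (sdist B2 (f x) x')) \<le> ereal mu)" for x'
  define M where "M = nat \<lceil>mu\<rceil>"
  have h: "sdist B2 x' (f (h x')) \<le> enat M" "sdist B2 (f (h x')) x' \<le> enat M" for x'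
  proof -
    have "max (ereal_of_enat (sdist B2 x' (f (h x')))) (ereal_of_enat (sdist B2 (f (h x')) x')) \<le> ereal mu"
      unfolding h_def by (rule someI_ex[OF mu])
    then have "ereal_of_enat (sdist B2 x' (f (h x'))) \<le> ereal mu"
      and "ereal_of_enat (sdist B2 (f (h x')) x') \<le> ereal mu" by simp_all
    then show "sdist B2 x' (f (h x')) \<le> enat M" "sdist B2 (f (h x')) x' \<le> enat M"
      unfolding M_def by (simp_all add: ereal_of_enat_le_ereal_imp)
  qed
  obtain L D where low: "\<forall>x y n. sdist B2 (f x) (f y) \<le> enat n \<longrightarrow> sdist B1 x y \<le> enat (L * n + D)"
    using qi_embedding_lower_bound assms(3) unfolding quasi_isometry_def by blast
  obtain C where C: "\<forall>b\<in>B2. word_length B1 (h b) \<le> enat C"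
    using generates_word_length_bounded[OF assms(2) B1(2)] by blast
  show ?thesis
  proof (rule growth_le_by_coarse_map[OF assms(2) B1(1), where h=h and c=L and d="C + L * (M + M) + D" and R=M])
    fix z m assume "word_length B2 z \<le> enat m"
    then obtain b where b: "b \<in> B2" "sdist B2 b z \<le> enat m"
      using word_length_le_enat_imp_sdist_from_generator by blast
    have "sdist B2 (f (h b)) (f (h z)) \<le> enat (M + m + M)"
      using sdist_triangle[OF sdist_triangle[OF h(2) b(2)] h(1)] .
    then have "sdist B1 (h b) (h z) \<le> enat (L * (M + m + M) + D)" using low by blast
    moreover have "word_length B1 (h b) \<le> enat C" using C b(1) by blast
    ultimately have "word_length B1 (h z) \<le> enat (C + (L * (M + m + M) + D))"
      using word_length_le_add_sdist by blast
    then show "word_length B1 (h z) \<le> enat (L * m + (C + L * (M + M) + D))"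
      by (simp add: algebra_simps)
  next
    fix y
    have "sdist B2 (f y) z \<le> enat M" if "h z = y" for z
      using h(2)[of z] that by simp
    then show "\<exists>x. \<forall>z. h z = y \<longrightarrow> sdist B2 x z \<le> enat M" by blast
  qed
qed

theorem theorem6p5:
  fixes A1 :: "'a::semigroup_mult set" and A2 :: "'b::semigroup_mult set"
  assumes "fin_gen A1" and "fin_gen A2"
  shows "((\<exists>f. qi_embedding A1 A2 f) \<and> (\<exists>g. qi_embedding A2 A1 g)
            \<longrightarrow> growth_equiv (growth A1) (growth A2))
       \<and> ((\<exists>B1 B2 f. fin_gen (B1 :: 'a set) \<and> fin_gen (B2 :: 'b set) \<and> quasi_isometry B1 B2 f)
            \<longrightarrow> growth_equiv (growth A1) (growth A2))"
proof -
  have A: "finite A1" "finite A2" using assms unfolding fin_gen_def by blast+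
  have "growth_equiv (growth A1) (growth A2)"
    if "qi_embedding A1 A2 f" "qi_embedding A2 A1 g" for f g
    unfolding growth_equiv_def
    using qi_embedding_growth_le[OF A(1) assms(2) that(1)] qi_embedding_growth_le[OF A(2) assms(1) that(2)]
    by blast
  moreover have "growth_equiv (growth A1) (growth A2)"
    if B: "fin_gen B1" "fin_gen B2" and f: "quasi_isometry B1 B2 f"
    for B1 :: "'a set" and B2 :: "'b set" and f
  proof -
    have fin: "finite B1" "finite B2" using B unfolding fin_gen_def by blast+
    have "qi_embedding B1 B2 f" using f unfolding quasi_isometry_def by blast
    have "growth_le (growth A1) (growth A2)"
      using growth_le_change_generators[OF A(1) B(1)]
        qi_embedding_growth_le[OF fin(1) B(2) \<open>qi_embedding B1 B2 f\<close>]
        growth_le_change_generators[OF fin(2) assms(2)]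
      by (blast intro: growth_le_trans)
    moreover have "growth_le (growth A2) (growth A1)"
      using growth_le_change_generators[OF A(2) B(2)]
        quasi_isometry_growth_le_converse[OF B(1) fin(2) f]
        growth_le_change_generators[OF fin(1) assms(1)]
      by (blast intro: growth_le_trans)
    ultimately show ?thesis unfolding growth_equiv_def by blast
  qed
  ultimately show ?thesis by blast
qed

end
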